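(* Let $q_1,\dots,q_8$ be the eight points $(\pm1,\pm1,\pm1)$ of $\mathbb{R}^3$, let $t\in(0,1)$ and $q_{j+8}=tq_j$ ($j=1,\dots,8$). Place nonzero mass $\mu_1$ at each vertex $q_1,\dots,q_8$ of the outer cube and nonzero mass $\mu_2$ at each vertex $q_9,\dots,q_{16}$ of the inner cube. There exists $\delta\in(0,1)$ such that: if $t\in(0,\delta)$ and the configuration is central, then $\mu_1$ and $\mu_2$ have the same sign; if $t\in(\delta,1)$ and the configuration is central, then $\mu_1$ and $\mu_2$ have opposite signs.
   Context: A configuration $q=(q_1,\dots,q_N)$ of distinct points in $\mathbb{R}^3$ with masses $m_1,\dots,m_N$ is a central configuration if there exists $c\in\mathbb{R}$ such that $\sum_{j\neq i} m_j\left(\frac{1}{|q_j-q_i|^3}-c\right)(q_j-q_i)=0$ for all $i=1,\dots,N$. *)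

theory Defs
  imports "HOL-Analysis.Analysis"
begin

definition central_config :: "'i set \<Rightarrow> ('i \<Rightarrow> real^3) \<Rightarrow> ('i \<Rightarrow> real) \<Rightarrow> bool" where
  "central_config I q m \<longleftrightarrow> inj_on q I \<and>
     (\<exists>c::real. \<forall>i\<in>I. (\<Sum>j\<in>I - {i}. (m j * (1 / norm (q j - q i) ^ 3 - c)) *\<^sub>R (q j - q i)) = 0)"

text \<open>The eight vertices (+-1,+-1,+-1) of the cube, indexed by 0..7 (binary digits give the signs).\<close>
definition cube_vertex :: "nat \<Rightarrow> real^3" where
  "cube_vertex j = vector [if odd j then -1 else 1,
                           if odd (j div 2) then -1 else 1,
                           if odd (j div 4) then -1 else 1]"

text \<open>Nested cubes: indices 0..7 outer cube q_1..q_8, indices 8..15 inner cube q_9..q_16 = t q_j.\<close>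
definition nested_cubes :: "real \<Rightarrow> nat \<Rightarrow> real^3" where
  "nested_cubes t j = (if j < 8 then cube_vertex j else t *\<^sub>R cube_vertex (j - 8))"

definition nested_masses :: "real \<Rightarrow> real \<Rightarrow> nat \<Rightarrow> real" where
  "nested_masses \<mu>1 \<mu>2 j = (if j < 8 then \<mu>1 else \<mu>2)"

end

theory Submission
  imports Defs
begin

(* The first coordinates of the equilibrium equations at the outer vertex q_1 = (1,1,1) and at the
   inner vertex t q_1 are two linear equations in the masses and the constant c. Eliminating c gives
   mu_1 t^2 P(t) = mu_2 (a - t^3 I(t)), where a is the attraction of a unit-mass cube on one of its own
   vertices, I(t) that of the inner cube on q_1, and P(t) > 0 on (0,1). The function t^3 I(t) is
   strictly increasing, below a at t = 1/2 and above a at t = 3/4; delta is the point where it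
   crosses a, obtained as a supremum, so no continuity argument is needed. *)

lemma norm_vec3: "norm (x::real^3) = sqrt ((x$1)^2 + (x$2)^2 + (x$3)^2)"
  by (simp add: norm_vec_def L2_set_def sum_3)

lemma sum_atLeastLessThan_16:
  "sum f {0..<16::nat} = f 0 + f 1 + f 2 + f 3 + f 4 + f 5 + f 6 + f 7
     + f 8 + f 9 + f 10 + f 11 + f 12 + f 13 + f 14 + f 15"
  by (simp add: eval_nat_numeral)

lemma sqrt_cube_eq: "0 \<le> x \<Longrightarrow> sqrt x ^ 3 = x * sqrt x"
  by (simp add: power3_eq_cube)

lemma mult_inverse_sqrt_cube:
  fixes a u :: real
  assumes "0 \<le> a" "0 < u"
  shows "u * (1 / sqrt (a * u^2) ^ 3) = 1 / u^2 / sqrt a ^ 3"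
  using assms by (simp add: real_sqrt_mult power_mult_distrib power2_eq_square power3_eq_cube)

lemma sqrt_cubes: "sqrt 3 ^ 3 = 3 * sqrt (3::real)" "sqrt 4 ^ 3 = (8::real)"
  "sqrt 8 ^ 3 = 16 * sqrt (2::real)" "sqrt 12 ^ 3 = 24 * sqrt (3::real)"
proof -
  have "sqrt 8 = 2 * sqrt (2::real)" "sqrt 12 = 2 * sqrt (3::real)"
    using real_sqrt_mult[of 4 2] real_sqrt_mult[of 4 3] by simp_all
  then show "sqrt 3 ^ 3 = 3 * sqrt (3::real)" "sqrt 4 ^ 3 = (8::real)"
    "sqrt 8 ^ 3 = 16 * sqrt (2::real)" "sqrt 12 ^ 3 = 24 * sqrt (3::real)"
    by (simp_all add: power3_eq_cube)
qed

lemma sqrt2_bounds: "1414/1000 \<le> sqrt (2::real)" "sqrt (2::real) \<le> 1415/1000"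
  by (rule real_le_rsqrt real_le_lsqrt; simp add: power2_eq_square)+

lemma sqrt3_bounds: "173/100 \<le> sqrt (3::real)" "sqrt (3::real) \<le> 17321/10000"
  by (rule real_le_rsqrt real_le_lsqrt; simp add: power2_eq_square)+

lemma strict_mono_on_add:
  fixes f g :: "'a::order \<Rightarrow> 'b::strict_ordered_ab_semigroup_add"
  assumes "strict_mono_on A f" "strict_mono_on A g"
  shows "strict_mono_on A (\<lambda>x. f x + g x)"
  using assms by (intro strict_mono_onI add_strict_mono) (auto dest: strict_mono_onD)

lemma strict_mono_on_mult:
  fixes f g :: "'a::order \<Rightarrow> 'b::linordered_semiring_strict"
  assumes "strict_mono_on A f" "strict_mono_on A g" "\<And>x. x \<in> A \<Longrightarrow> 0 \<le> f x" "\<And>x. x \<in> A \<Longrightarrow> 0 \<le> g x"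
  shows "strict_mono_on A (\<lambda>x. f x * g x)"
  using assms by (intro strict_mono_onI mult_strict_mono') (auto dest: strict_mono_onD)

lemma strict_mono_on_sqrt: "strict_mono_on A f \<Longrightarrow> strict_mono_on A (\<lambda>x. sqrt (f x))"
  by (intro strict_mono_onI) (auto dest: strict_mono_onD)

lemma strict_mono_on_divide: "strict_mono_on A f \<Longrightarrow> (0::real) < c \<Longrightarrow> strict_mono_on A (\<lambda>x. f x / c)"
  by (intro strict_mono_onI) (auto dest: strict_mono_onD simp: divide_strict_right_mono)

lemma strict_mono_on_crossing:
  fixes K :: "'a::linear_continuum \<Rightarrow> 'b::linorder"
  assumes mono: "strict_mono_on {lo<..<hi} K"
    and a: "a \<in> {lo<..<hi}" "K a < c" and b: "b \<in> {lo<..<hi}" "c < K b"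
  obtains \<delta> where "lo < \<delta>" "\<delta> < hi"
    "\<And>t. lo < t \<Longrightarrow> t < \<delta> \<Longrightarrow> K t < c"
    "\<And>t. \<delta> < t \<Longrightarrow> t < hi \<Longrightarrow> c < K t"
proof
  define S where "S = {t \<in> {lo<..<hi}. K t < c}"
  have "a \<in> S"
    using a by (simp add: S_def)
  have le_b: "t \<le> b" if "t \<in> S" for t
  proof (rule ccontr)
    assume "\<not> t \<le> b"
    then have "K b < K t"
      using that b mono by (auto simp: S_def dest: strict_mono_onD)
    moreover have "K t < c"
      using that by (simp add: S_def)
    ultimately show False
      using b(2) by (meson less_asym less_trans)
  qed
  then have bdd: "bdd_above S"
    by (rule bdd_aboveI)
  have lo_Sup: "lo < Sup S"
    using a(1) cSup_upper[OF \<open>a \<in> S\<close> bdd] by (auto intro: less_le_trans)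
  then show "lo < Sup S" .
  show "Sup S < hi"
    using b cSup_least[of S b] \<open>a \<in> S\<close> le_b by (auto intro: le_less_trans)
  show "K t < c" if t: "lo < t" "t < Sup S" for t
  proof -
    obtain s where "s \<in> S" "t < s"
      using t less_cSup_iff[OF _ bdd, of t] \<open>a \<in> S\<close> by auto
    with t mono show ?thesis
      by (auto simp: S_def dest!: strict_mono_onD[of _ _ t s])
  qed
  show "c < K t" if t: "Sup S < t" "t < hi" for t
  proof -
    obtain s where s: "Sup S < s" "s < t"
      using t dense by blast
    then have "s \<notin> S"
      using cSup_upper[OF _ bdd] by (auto simp: not_le[symmetric])
    moreover have "lo < s"
      using lo_Sup s(1) by (rule less_trans)
    ultimately have "c \<le> K s"
      using s t by (auto simp: S_def not_less)
    also have "K s < K t"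
      using \<open>lo < s\<close> s t by (intro strict_mono_onD[OF mono]) auto
    finally show ?thesis .
  qed
qed

section \<open>The equilibrium equations\<close>

text \<open>With unit masses, the first coordinate of the sum of (q_j - q_1)/|q_j - q_1|^3 is
  -cube_pull over the other outer vertices and -inner_pull t over the inner vertices, and
  the first coordinate of the sum of (q_j - q_9)/|q_j - q_9|^3 over the outer vertices is
  outer_pull t. The squared distance from q_1 to t q_j is edge_sqdist t if q_j is joined to q_1
  by an edge and face_sqdist t if by a face diagonal.\<close>

definition edge_sqdist :: "real \<Rightarrow> real" where "edge_sqdist t = 3 - 2*t + 3*t^2"

definition face_sqdist :: "real \<Rightarrow> real" where "face_sqdist t = 3 + 2*t + 3*t^2"

definition cube_pull :: real where "cube_pull = 1/4 + 1/(4 * sqrt 2) + 1/(12 * sqrt 3)"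

definition inner_pull :: "real \<Rightarrow> real" where
  "inner_pull t = (1/(1-t)^2 + 1/(1+t)^2) / (3 * sqrt 3)
     + (3-t) / sqrt (edge_sqdist t) ^ 3 + (3+t) / sqrt (face_sqdist t) ^ 3"

definition outer_pull :: "real \<Rightarrow> real" where
  "outer_pull t = (1/(1-t)^2 - 1/(1+t)^2) / (3 * sqrt 3)
     + (1-3*t) / sqrt (edge_sqdist t) ^ 3 - (1+3*t) / sqrt (face_sqdist t) ^ 3"

lemma edge_sqdist_ge: "8/3 \<le> edge_sqdist t"
proof -
  have "edge_sqdist t = 3 * (t - 1/3)^2 + 8/3"
    by (simp add: edge_sqdist_def power2_eq_square algebra_simps)
  then show ?thesis
    by simp
qed

lemma edge_sqdist_pos: "0 < edge_sqdist t"
  using edge_sqdist_ge[of t] by linarith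

lemma face_sqdist_pos: "0 < t \<Longrightarrow> 0 < face_sqdist t"
  by (simp add: face_sqdist_def add_pos_nonneg)

lemma diagonal_inverse_cubes:
  fixes t :: real
  assumes "0 < t" "t < 1"
  shows "(1 - t) * (1 / sqrt (3 * (1 - t)\<^sup>2) ^ 3) = 1 / (1 - t)^2 / (3 * sqrt 3)"
    and "(t - 1) * (1 / sqrt (3 * (t - 1)\<^sup>2) ^ 3) = - (1 / (1 - t)^2 / (3 * sqrt 3))"
    and "(- t - 1) * (1 / sqrt (3 * (- t - 1)\<^sup>2) ^ 3) = - (1 / (1 + t)^2 / (3 * sqrt 3))"
    and "(- 1 - t) * (1 / sqrt (3 * (- 1 - t)\<^sup>2) ^ 3) = - (1 / (1 + t)^2 / (3 * sqrt 3))"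
proof -
  have "(- 1 - t)\<^sup>2 = (1 + t)\<^sup>2" "(- t - 1)\<^sup>2 = (1 + t)\<^sup>2" "(t - 1)\<^sup>2 = (1 - t)\<^sup>2"
    by (simp_all add: power2_eq_square algebra_simps)
  moreover have "- 1 - t = - (1 + t)" "- t - 1 = - (1 + t)" "t - 1 = - (1 - t)"
    by simp_all
  ultimately show "(1 - t) * (1 / sqrt (3 * (1 - t)\<^sup>2) ^ 3) = 1 / (1 - t)^2 / (3 * sqrt 3)"
    and "(t - 1) * (1 / sqrt (3 * (t - 1)\<^sup>2) ^ 3) = - (1 / (1 - t)^2 / (3 * sqrt 3))"
    and "(- t - 1) * (1 / sqrt (3 * (- t - 1)\<^sup>2) ^ 3) = - (1 / (1 + t)^2 / (3 * sqrt 3))"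
    and "(- 1 - t) * (1 / sqrt (3 * (- 1 - t)\<^sup>2) ^ 3) = - (1 / (1 + t)^2 / (3 * sqrt 3))"
    using mult_inverse_sqrt_cube[of 3 "1 - t"] mult_inverse_sqrt_cube[of 3 "1 + t"] assms
    by (simp_all only: mult_minus_left sqrt_cubes)
qed

lemma nested_cubes_outer_equation:
  assumes "0 < t" "t < 1"
  shows "(\<Sum>j\<in>{0..<16} - {0}. (nested_masses \<mu>1 \<mu>2 j * (1 / norm (nested_cubes t j - nested_cubes t 0) ^ 3 - c))
            *\<^sub>R (nested_cubes t j - nested_cubes t 0)) $ 1
   = 8 * c * (\<mu>1 + \<mu>2) - \<mu>1 * cube_pull - \<mu>2 * inner_pull t"
proof -
  have sqdist: "2 * (- t - 1)\<^sup>2 + (t - 1)\<^sup>2 = face_sqdist t" "2 * (t - 1)\<^sup>2 + (- t - 1)\<^sup>2 = edge_sqdist t"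
    by (simp_all add: face_sqdist_def edge_sqdist_def power2_eq_square algebra_simps)
  have rescale: "1 / (16 * sqrt 2) = 1 / (4 * sqrt 2) / 4" "1 / (24 * sqrt 3) = 1 / (12 * sqrt 3) / 2"
    by simp_all
  show ?thesis
    unfolding sum_component sum_diff1[of "{0..<16::nat}", simplified] sum_atLeastLessThan_16
    apply (simp add: nested_cubes_def nested_masses_def norm_vec3 cube_vertex_def sqdist sqrt_cubes)
    unfolding cube_pull_def inner_pull_def
    using diagonal_inverse_cubes(2,3)[OF assms] rescale by algebra
qed

lemma nested_cubes_inner_equation:
  assumes "0 < t" "t < 1"
  shows "(\<Sum>j\<in>{0..<16} - {8}. (nested_masses \<mu>1 \<mu>2 j * (1 / norm (nested_cubes t j - nested_cubes t 8) ^ 3 - c))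
            *\<^sub>R (nested_cubes t j - nested_cubes t 8)) $ 1
   = 8 * c * t * (\<mu>1 + \<mu>2) + \<mu>1 * outer_pull t - \<mu>2 * cube_pull / t^2"
proof -
  have sqdist: "2 * (- 1 - t)\<^sup>2 + (1 - t)\<^sup>2 = face_sqdist t" "2 * (1 - t)\<^sup>2 + (- 1 - t)\<^sup>2 = edge_sqdist t"
    by (simp_all add: face_sqdist_def edge_sqdist_def power2_eq_square algebra_simps)
  have "t * (1 / sqrt (4 * t\<^sup>2) ^ 3) = 1 / 4 / t^2 / 2"
    "t * (1 / sqrt (8 * t\<^sup>2) ^ 3) = 1 / (4 * sqrt 2) / t^2 / 4"
    "t * (1 / sqrt (12 * t\<^sup>2) ^ 3) = 1 / (12 * sqrt 3) / t^2 / 2"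
    using mult_inverse_sqrt_cube[of _ t] assms by (simp_all add: sqrt_cubes)
  note scaled = this
  show ?thesis
    unfolding sum_component sum_diff1[of "{0..<16::nat}", simplified] sum_atLeastLessThan_16
    apply (simp add: nested_cubes_def nested_masses_def norm_vec3 cube_vertex_def sqdist)
    unfolding cube_pull_def outer_pull_def
    using scaled diagonal_inverse_cubes(1,4)[OF assms] by algebra
qed

lemma central_nested_cubes_mass_relation:
  assumes t: "0 < t" "t < 1"
    and central: "central_config {0..<16} (nested_cubes t) (nested_masses \<mu>1 \<mu>2)"
  shows "\<mu>1 * (t^2 * (outer_pull t + t * cube_pull)) = \<mu>2 * (cube_pull - t^3 * inner_pull t)"
proof -
  obtain c where c: "\<forall>i\<in>{0..<16}. (\<Sum>j\<in>{0..<16} - {i}.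
      (nested_masses \<mu>1 \<mu>2 j * (1 / norm (nested_cubes t j - nested_cubes t i) ^ 3 - c))
        *\<^sub>R (nested_cubes t j - nested_cubes t i)) = 0"
    using central unfolding central_config_def by blast
  have outer: "8 * c * (\<mu>1 + \<mu>2) - \<mu>1 * cube_pull - \<mu>2 * inner_pull t = 0"
    using nested_cubes_outer_equation[OF t, of \<mu>1 \<mu>2 c] by (simp add: c)
  have inner: "8 * c * t * (\<mu>1 + \<mu>2) + \<mu>1 * outer_pull t - \<mu>2 * cube_pull / t^2 = 0"
    using nested_cubes_inner_equation[OF t, of \<mu>1 \<mu>2 c] by (simp add: c)
  have "t^2 * (t * (8 * c * (\<mu>1 + \<mu>2) - \<mu>1 * cube_pull - \<mu>2 * inner_pull t)
          - (8 * c * t * (\<mu>1 + \<mu>2) + \<mu>1 * outer_pull t - \<mu>2 * cube_pull / t^2))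
        = \<mu>2 * (cube_pull - t^3 * inner_pull t) - \<mu>1 * (t^2 * (outer_pull t + t * cube_pull))"
    using t by (simp add: field_simps power2_eq_square power3_eq_cube)
  then show ?thesis
    using outer inner by simp
qed

section \<open>The coefficient of the outer mass is positive\<close>

lemma cube_pull_bounds: "47/100 \<le> cube_pull" "cube_pull \<le> 48/100"
proof -
  have "1 / (4 * (1415/1000)) \<le> 1 / (4 * sqrt (2::real))" "1 / (4 * sqrt (2::real)) \<le> 1 / (4 * (1414/1000))"
    "1 / (12 * (17321/10000)) \<le> 1 / (12 * sqrt (3::real))" "1 / (12 * sqrt (3::real)) \<le> 1 / (12 * (173/100))"
    using sqrt2_bounds sqrt3_bounds by (intro divide_left_mono; simp)+
  then show "47/100 \<le> cube_pull" "cube_pull \<le> 48/100"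
    unfolding cube_pull_def by simp_all
qed

lemma inverse_square_difference_ge:
  fixes t :: real
  assumes "0 < t" "t < 1"
  shows "4 * t \<le> 1 / (1 - t)^2 - 1 / (1 + t)^2"
proof -
  have "1 / (1 - t)^2 - 1 / (1 + t)^2 = ((1 + t)^2 - (1 - t)^2) / ((1 - t)^2 * (1 + t)^2)"
    using assms by (simp add: diff_frac_eq)
  also have "\<dots> = 4 * t / (1 - t^2)^2"
    by (simp add: power2_eq_square algebra_simps)
  finally have "1 / (1 - t)^2 - 1 / (1 + t)^2 = 4 * t / (1 - t^2)^2" .
  moreover have "0 < (1 - t^2)^2" "(1 - t^2)^2 \<le> 1"
    using assms power_strict_mono[of t 1 2] by (simp_all add: power_le_one)
  ultimately show ?thesis
    using assms by (simp add: le_divide_eq mult_left_le)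
qed

lemma face_term_upper_bound:
  fixes t :: real
  assumes "0 < t"
  shows "sqrt 3 * ((1 + 3*t) / sqrt (face_sqdist t) ^ 3) \<le> 1/3 + 7*t/9"
proof -
  have "3 + 2*t \<le> face_sqdist t"
    unfolding face_sqdist_def by simp
  moreover from this have "sqrt 3 \<le> sqrt (face_sqdist t)"
    using assms by simp
  ultimately have "(3 + 2*t) * sqrt 3 \<le> sqrt (face_sqdist t) ^ 3"
    using assms face_sqdist_pos[OF assms] by (simp add: sqrt_cube_eq mult_mono)
  then have "sqrt 3 * ((1 + 3*t) / sqrt (face_sqdist t) ^ 3) \<le> sqrt 3 * ((1 + 3*t) / ((3 + 2*t) * sqrt 3))"
    using assms face_sqdist_pos[OF assms] by (intro mult_left_mono divide_left_mono) auto
  also have "\<dots> = (1 + 3*t) / (3 + 2*t)"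
    by simp
  also have "\<dots> \<le> 1/3 + 7*t/9"
  proof -
    have "(1/3 + 7*t/9) * (3 + 2*t) = 1 + 3*t + 14/9 * t^2"
      by (simp add: field_simps power2_eq_square)
    then have "1 + 3*t \<le> (1/3 + 7*t/9) * (3 + 2*t)"
      using zero_le_power2[of t] by linarith
    then show ?thesis
      using assms by (simp add: pos_divide_le_eq)
  qed
  finally show ?thesis .
qed

lemma edge_term_lower_bound:
  fixes t :: real
  assumes "0 < t" "t < 1"
  shows "1/3 - 6*t/5 \<le> sqrt 3 * ((1 - 3*t) / sqrt (edge_sqdist t) ^ 3)"
proof (cases "t \<le> 1/3")
  case True
  have "edge_sqdist t \<le> 3"
    using True assms by (simp add: edge_sqdist_def power2_eq_square)
  moreover from this have "sqrt (edge_sqdist t) \<le> sqrt 3"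
    by simp
  ultimately have "sqrt (edge_sqdist t) ^ 3 \<le> 3 * sqrt 3"
    using edge_sqdist_pos[of t] by (simp add: sqrt_cube_eq mult_mono)
  then have "(1 - 3*t) / (3 * sqrt 3) \<le> (1 - 3*t) / sqrt (edge_sqdist t) ^ 3"
    using True edge_sqdist_pos[of t] by (intro divide_left_mono) auto
  then have "1/3 - t \<le> sqrt 3 * ((1 - 3*t) / sqrt (edge_sqdist t) ^ 3)"
    by (simp add: divide_le_eq algebra_simps)
  then show ?thesis
    using assms by linarith
next
  case False
  have "163/100 \<le> sqrt (8/3::real)"
    by (rule real_le_rsqrt) (simp add: power2_eq_square)
  also have "\<dots> \<le> sqrt (edge_sqdist t)"
    using edge_sqdist_ge[of t] by simp
  finally have "8/3 * (163/100) \<le> edge_sqdist t * sqrt (edge_sqdist t)"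
    using edge_sqdist_ge[of t] by (intro mult_mono) auto
  then have "(1 - 3*t) / (8/3 * (163/100)) \<le> (1 - 3*t) / sqrt (edge_sqdist t) ^ 3"
    using False edge_sqdist_pos[of t] by (intro divide_left_mono_neg) (auto simp: sqrt_cube_eq)
  then have "sqrt 3 * ((1 - 3*t) / (8/3 * (163/100))) \<le> sqrt 3 * ((1 - 3*t) / sqrt (edge_sqdist t) ^ 3)"
    by (rule mult_left_mono) simp
  moreover have "(17321/10000) * ((1 - 3*t) / (8/3 * (163/100))) \<le> sqrt 3 * ((1 - 3*t) / (8/3 * (163/100)))"
    using False sqrt3_bounds(2) by (intro mult_right_mono_neg) auto
  moreover have "1/3 - 6*t/5 \<le> (17321/10000) * ((1 - 3*t) / (8/3 * (163/100)))"
    using assms by simp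
  ultimately show ?thesis
    by linarith
qed

lemma outer_pull_plus_cube_pull_pos:
  assumes "0 < t" "t < 1"
  shows "0 < outer_pull t + t * cube_pull"
proof -
  have "sqrt 3 * outer_pull t = (1 / (1 - t)^2 - 1 / (1 + t)^2) / 3
      + sqrt 3 * ((1 - 3*t) / sqrt (edge_sqdist t) ^ 3) - sqrt 3 * ((1 + 3*t) / sqrt (face_sqdist t) ^ 3)"
  proof -
    have "sqrt 3 * (x / (3 * sqrt 3)) = x / 3" for x :: real
      by simp
    then show ?thesis
      unfolding outer_pull_def by (simp only: right_diff_distrib distrib_left)
  qed
  moreover have "4 * t / 3 \<le> (1 / (1 - t)^2 - 1 / (1 + t)^2) / 3"
    using inverse_square_difference_ge[OF assms] by (rule divide_right_mono) simp
  ultimately have "- 29/45 * t \<le> sqrt 3 * outer_pull t"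
    using edge_term_lower_bound[OF assms]
      face_term_upper_bound[OF assms(1)] by linarith
  moreover have "173/100 * (47/100) \<le> sqrt 3 * cube_pull"
    using sqrt3_bounds(1) cube_pull_bounds(1) by (intro mult_mono) auto
  then have "173/100 * (47/100) * t \<le> sqrt 3 * cube_pull * t"
    using assms by (intro mult_right_mono) auto
  ultimately have "0 < sqrt 3 * outer_pull t + sqrt 3 * cube_pull * t"
    using assms by linarith
  then have "0 < sqrt 3 * (outer_pull t + t * cube_pull)"
    by (simp add: algebra_simps)
  then show ?thesis
    by (simp add: zero_less_mult_iff)
qed

lemma central_nested_cubes_sgn:
  assumes "0 < t" "t < 1"
    and "central_config {0..<16} (nested_cubes t) (nested_masses \<mu>1 \<mu>2)"
  shows "sgn \<mu>1 = sgn \<mu>2 * sgn (cube_pull - t^3 * inner_pull t)"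
proof -
  have "sgn (t^2 * (outer_pull t + t * cube_pull)) = 1"
    using assms(1) outer_pull_plus_cube_pull_pos[OF assms(1,2)] by simp
  then show ?thesis
    using arg_cong[OF central_nested_cubes_mass_relation[OF assms], of sgn] by (simp only: sgn_mult)
qed

section \<open>The coefficient of the inner mass changes sign once\<close>

lemma strict_mono_on_cube_div_sq_diff: "strict_mono_on {0<..<1} (\<lambda>t::real. t^3 / (1 - t)^2)"
proof (rule strict_mono_onI)
  fix s t :: real
  assume "s \<in> {0<..<1}" "t \<in> {0<..<1}" "s < t"
  then have "0 < s^3" "s^3 \<le> t^3" "0 < (1 - t)^2" "(1 - t)^2 < (1 - s)^2"
    by (auto intro: power_strict_mono power_mono)
  then show "s^3 / (1 - s)^2 < t^3 / (1 - t)^2"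
    by (rule frac_less2)
qed

lemma strict_mono_on_cube_div_sq_sum: "strict_mono_on {0<..} (\<lambda>t::real. t^3 / (1 + t)^2)"
proof (rule strict_mono_onI)
  fix s t :: real
  assume "s \<in> {0<..}" "t \<in> {0<..}" "s < t"
  then have "0 < s" "s < t"
    by auto
  have "x^3 / (1 + x)^2 = x * (x / (1 + x))^2" if "0 < x" for x :: real
    using that by (simp add: power2_eq_square power3_eq_cube)
  moreover have "s / (1 + s) < t / (1 + t)"
    using \<open>0 < s\<close> \<open>s < t\<close> by (simp add: frac_less_eq field_simps)
  then have "(s / (1 + s))^2 < (t / (1 + t))^2"
    using \<open>0 < s\<close> by (intro power_strict_mono) auto
  then have "s * (s / (1 + s))^2 < t * (t / (1 + t))^2"
    using \<open>0 < s\<close> \<open>s < t\<close> by (intro mult_strict_mono) auto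
  ultimately show "s^3 / (1 + s)^2 < t^3 / (1 + t)^2"
    using \<open>0 < s\<close> \<open>s < t\<close> by simp
qed

lemma strict_mono_on_sq_div_edge_sqdist: "strict_mono_on {0<..<1} (\<lambda>t. t^2 / edge_sqdist t)"
proof (rule strict_mono_onI)
  fix s t :: real
  assume "s \<in> {0<..<1}" "t \<in> {0<..<1}" "s < t"
  then have "0 < s" "s < t" "t < 1"
    by auto
  then have "s * t < s"
    using mult_strict_left_mono[of t 1 s] by simp
  then have "0 < 3 * (t + s) - 2 * (s * t)"
    using \<open>0 < s\<close> \<open>s < t\<close> by (smt (verit))
  then have "0 < (t - s) * (3 * (t + s) - 2 * (s * t))"
    using \<open>s < t\<close> by simp
  also have "\<dots> = t^2 * edge_sqdist s - s^2 * edge_sqdist t"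
    by (simp add: edge_sqdist_def power2_eq_square algebra_simps)
  finally show "s^2 / edge_sqdist s < t^2 / edge_sqdist t"
    using edge_sqdist_pos[of s] edge_sqdist_pos[of t] by (simp add: divide_simps)
qed

lemma strict_mono_on_sq_mult_div_edge_sqdist: "strict_mono_on {0<..<1} (\<lambda>t. t^2 * (3 - t) / edge_sqdist t)"
proof (rule strict_mono_onI)
  fix s t :: real
  assume "s \<in> {0<..<1}" "t \<in> {0<..<1}" "s < t"
  then have st: "0 < s" "s < t" "t < 1"
    by auto
  let ?q = "9 * (t + s) - 3 * (t * t + t * s + s * s) - 6 * (s * t) + 2 * (s * t * (t + s)) - 3 * ((s * s) * (t * t))"
  have small: "t * t < t" "s * s < s" "t * s < s" "s * t < s" "0 < s * t * (t + s)"
    using st by (auto intro: mult_strict_left_mono[of _ 1, simplified])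
  then have "t * t < 1"
    using st by linarith
  then have "(s * s) * (t * t) < s * s"
    using mult_strict_left_mono[of "t * t" 1 "s * s"] st by simp
  then have "0 < (t - s) * ?q"
    using small st by (intro mult_pos_pos) (simp, smt (verit))
  also have "\<dots> = t^2 * (3 - t) * edge_sqdist s - s^2 * (3 - s) * edge_sqdist t"
    by (simp add: edge_sqdist_def power2_eq_square power3_eq_cube algebra_simps)
  finally show "s^2 * (3 - s) / edge_sqdist s < t^2 * (3 - t) / edge_sqdist t"
    using edge_sqdist_pos[of s] edge_sqdist_pos[of t] by (simp add: divide_simps)
qed

lemma strict_mono_on_sq_div_face_sqdist: "strict_mono_on {0<..} (\<lambda>t. t^2 / face_sqdist t)"
proof (rule strict_mono_onI)
  fix s t :: real
  assume "s \<in> {0<..}" "t \<in> {0<..}" "s < t"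
  then have "0 < (t - s) * (3 * (t + s) + 2 * (s * t))"
    by (intro mult_pos_pos add_pos_pos) auto
  also have "\<dots> = t^2 * face_sqdist s - s^2 * face_sqdist t"
    by (simp add: face_sqdist_def power2_eq_square algebra_simps)
  finally show "s^2 / face_sqdist s < t^2 / face_sqdist t"
    using face_sqdist_pos[of s] face_sqdist_pos[of t] \<open>s \<in> {0<..}\<close> \<open>t \<in> {0<..}\<close>
    by (simp add: divide_simps)
qed

lemma scaled_inner_pull_eq:
  assumes "0 < t"
  shows "t^3 * inner_pull t = (t^3 / (1 - t)^2 + t^3 / (1 + t)^2) / (3 * sqrt 3)
    + t^2 * (3 - t) / edge_sqdist t * sqrt (t^2 / edge_sqdist t)
    + t^2 / face_sqdist t * (3 + t) * sqrt (t^2 / face_sqdist t)"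
proof -
  have "sqrt (t^2 / d) = t / sqrt d" "sqrt d ^ 3 = d * sqrt d" if "0 < d" for d
    using assms that by (simp_all add: real_sqrt_divide sqrt_cube_eq)
  note e = this[OF edge_sqdist_pos[of t]] and f = this[OF face_sqdist_pos[OF assms]]
  show ?thesis
    using edge_sqdist_pos[of t] face_sqdist_pos[OF assms]
    unfolding inner_pull_def e f by (simp add: field_simps power2_eq_square power3_eq_cube)
qed

lemma strict_mono_on_scaled_inner_pull: "strict_mono_on {0<..<1} (\<lambda>t. t^3 * inner_pull t)"
proof -
  have sub: "{0<..<1} \<subseteq> {0::real<..}"
    by auto
  have antipodal: "strict_mono_on {0<..<1} (\<lambda>t. (t^3 / (1 - t)^2 + t^3 / (1 + t)^2) / (3 * sqrt 3))"
    using strict_mono_on_cube_div_sq_sum sub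
    by (intro strict_mono_on_divide strict_mono_on_add strict_mono_on_cube_div_sq_diff)
      (auto intro: monotone_on_subset)
  have edge: "strict_mono_on {0<..<1} (\<lambda>t. t^2 * (3 - t) / edge_sqdist t * sqrt (t^2 / edge_sqdist t))"
    using edge_sqdist_pos
    by (intro strict_mono_on_mult strict_mono_on_sqrt strict_mono_on_sq_mult_div_edge_sqdist
        strict_mono_on_sq_div_edge_sqdist) (auto intro!: divide_nonneg_pos)
  have face_ratio: "strict_mono_on {0<..<1} (\<lambda>t. t^2 / face_sqdist t)"
    using strict_mono_on_sq_div_face_sqdist sub by (rule monotone_on_subset)
  have nonneg: "0 \<le> t^2 / face_sqdist t" if "t \<in> {0<..<1}" for t
    using that face_sqdist_pos[of t] by simp
  have "strict_mono_on {0<..<1} (\<lambda>t::real. 3 + t)"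
    by (rule strict_mono_onI) simp
  with face_ratio have "strict_mono_on {0<..<1} (\<lambda>t. t^2 / face_sqdist t * (3 + t))"
    by (rule strict_mono_on_mult) (use nonneg in auto)
  then have face: "strict_mono_on {0<..<1} (\<lambda>t. t^2 / face_sqdist t * (3 + t) * sqrt (t^2 / face_sqdist t))"
    by (rule strict_mono_on_mult[OF _ strict_mono_on_sqrt[OF face_ratio]])
      (use nonneg face_sqdist_pos in \<open>auto intro!: divide_nonneg_pos\<close>)
  show ?thesis
    using strict_mono_on_add[OF strict_mono_on_add[OF antipodal edge] face]
    by (auto intro!: strict_mono_onI dest: strict_mono_onD simp: scaled_inner_pull_eq)
qed

lemma scaled_inner_pull_half_lt: "(1/2)^3 * inner_pull (1/2) < cube_pull"
proof -
  have "inner_pull (1/2) = (40/9) / (3 * sqrt 3) + (5/2) / sqrt (11/4) ^ 3 + (7/2) / sqrt (19/4) ^ 3"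
    unfolding inner_pull_def edge_sqdist_def face_sqdist_def by (simp add: power2_eq_square)
  moreover have "(40/9) / (3 * sqrt 3) \<le> (40/9) / (3 * (173/100::real))"
    using sqrt3_bounds(1) by (intro divide_left_mono) auto
  moreover have "(3/2)^3 \<le> sqrt (11/4::real) ^ 3" "2^3 \<le> sqrt (19/4::real) ^ 3"
    by (intro power_mono real_le_rsqrt; simp add: power2_eq_square)+
  then have "(5/2) / sqrt (11/4) ^ 3 \<le> (5/2) / (3/2::real)^3" "(7/2) / sqrt (19/4) ^ 3 \<le> (7/2) / (2::real)^3"
    by (intro divide_left_mono; simp)+
  ultimately have "inner_pull (1/2) \<le> (40/9) / (3 * (173/100)) + (5/2) / (27/8) + (7/2) / 8"
    by (simp add: power_divide)
  then show ?thesis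
    using cube_pull_bounds(1) by (simp add: power_divide)
qed

lemma scaled_inner_pull_three_quarters_gt: "cube_pull < (3/4)^3 * inner_pull (3/4)"
proof -
  have "inner_pull (3/4) = (16 + 16/49) / (3 * sqrt 3)
      + (9/4) / sqrt (edge_sqdist (3/4)) ^ 3 + (15/4) / sqrt (face_sqdist (3/4)) ^ 3"
    unfolding inner_pull_def by (simp add: power2_eq_square)
  moreover have "16 / (3 * (17321/10000)) \<le> (16 + 16/49) / (3 * sqrt (3::real))"
    using sqrt3_bounds(2) by (intro frac_le) auto
  moreover have "0 \<le> (9/4) / sqrt (edge_sqdist (3/4)) ^ 3" "0 \<le> (15/4) / sqrt (face_sqdist (3/4)) ^ 3"
    using edge_sqdist_pos[of "3/4"] face_sqdist_pos[of "3/4"] by (auto simp: less_imp_le)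
  ultimately have "16 / (3 * (17321/10000)) \<le> inner_pull (3/4)"
    by linarith
  then show ?thesis
    using cube_pull_bounds(2) by (simp add: power_divide)
qed

theorem theorem11:
  shows "\<exists>\<delta>::real. 0 < \<delta> \<and> \<delta> < 1 \<and>
    (\<forall>t \<mu>1 \<mu>2. \<mu>1 \<noteq> 0 \<longrightarrow> \<mu>2 \<noteq> 0 \<longrightarrow>
       central_config {0..<16} (nested_cubes t) (nested_masses \<mu>1 \<mu>2) \<longrightarrow>
       (0 < t \<and> t < \<delta> \<longrightarrow> sgn \<mu>1 = sgn \<mu>2) \<and>
       (\<delta> < t \<and> t < 1 \<longrightarrow> sgn \<mu>1 = - sgn \<mu>2))"
proof -
  obtain \<delta> :: real where \<delta>: "0 < \<delta>" "\<delta> < 1"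
    and below: "\<And>t. 0 < t \<Longrightarrow> t < \<delta> \<Longrightarrow> t^3 * inner_pull t < cube_pull"
    and above: "\<And>t. \<delta> < t \<Longrightarrow> t < 1 \<Longrightarrow> cube_pull < t^3 * inner_pull t"
    using strict_mono_on_crossing[OF strict_mono_on_scaled_inner_pull _ scaled_inner_pull_half_lt
        _ scaled_inner_pull_three_quarters_gt]
    by auto
  show ?thesis
  proof (intro exI[of _ \<delta>] conjI allI impI)
    fix t \<mu>1 \<mu>2 :: real
    \<comment> \<open>The masses need not be nonzero: the sign relation holds for all masses.\<close>
    assume central: "central_config {0..<16} (nested_cubes t) (nested_masses \<mu>1 \<mu>2)"
    show "sgn \<mu>1 = sgn \<mu>2" if "0 < t \<and> t < \<delta>"
      using that below[of t] central_nested_cubes_sgn[OF _ _ central] \<delta> by auto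
    show "sgn \<mu>1 = - sgn \<mu>2" if "\<delta> < t \<and> t < 1"
      using that above[of t] central_nested_cubes_sgn[OF _ _ central] \<delta> by auto
  qed (use \<delta> in auto)
qed

end
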